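(* Let $\Phi$ be a real, additive gain graph on $\{1,\dots,n\}$ with edge set $E$ and let $\mathbf{Q}\in(\mathbb{E}^d)^n$. If $\mathbf{Q}$ has ideal general position and, for every edge set $S\subseteq E$ that is a forest with $d+1$ edges, $\bigcap_{e\in S}h(e)=\emptyset$ in $\mathcal{H}(\Phi;\mathbf{Q})$, then $\mathbf{Q}$ has general position with respect to $\Phi$.
   Context: A real, additive gain graph $\Phi$ on $V=\{1,\dots,n\}$: finite graph with edge set $E$ (multiple edges allowed, every edge with two distinct endpoints) and gains $\phi(e;i,j)\in\mathbb{R}$ with $\phi(e;j,i)=-\phi(e;i,j)$. $S\subseteq E$ is balanced if every circle in $S$ has gain sum $0$ (read consistently); a forest is an edge set containing no circle; $c(S)$ counts components of $(V,S)$, isolated vertices included. With $\psi_{ij}(P)=d(P,Q_i)^2-d(P,Q_j)^2$, $\mathcal{H}(\Phi;\mathbf{Q})$ consists of the hyperplanes $h(e)=\{P:\psi_{ij}(P)=\phi(e;i,j)\}$ for edges $e$ with endpoints $i,j$. $\mathcal{L}(\mathcal{H})$: nonempty intersections of subsets of $\mathcal{H}$ (including $\mathbb{E}^d$) ordered by reverse inclusion; $E(s)=\{e:h(e)\supseteq s\}$. Ideal general position: the points are distinct and, with $\mathbb{E}^d\subset\mathbb{P}^d$, $h_\infty$ the ideal hyperplane and $p_{ij}$ the ideal point of line $Q_iQ_j$, for every set $T$ of unordered pairs the projective span of $\{p_{ij}:\{i,j\}\in T\}$ has dimension $\min(n-c(T),d)-1$, $c(T)$ being the number of components of $(\{1,\dots,n\},T)$.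 A balanced flat is a balanced $S\subseteq E$ such that every $e\notin S$ with both endpoints in one component of $(V,S)$ makes $S\cup\{e\}$ unbalanced; rank $n-c(S)$. General position with respect to $\Phi$: $s\mapsto E(s)$ is a poset isomorphism from $\mathcal{L}(\mathcal{H}(\Phi;\mathbf{Q}))$ onto the poset (by inclusion) of balanced flats of rank at most $d$. *)

theory Defs
  imports "HOL-Analysis.Analysis"
begin

(* A real additive gain graph on V = {1..n}:
   E :: 'e set (finite; parallel edges allowed since edges are abstract),
   ends e = (i,j) with i \<noteq> j, both in {1..n}   (a reference orientation of e),
   gain e = \<phi>(e;i,j) for ends e = (i,j); hence \<phi>(e;j,i) = - gain e. *)

definition gain_graph :: "nat \<Rightarrow> 'e set \<Rightarrow> ('e \<Rightarrow> nat \<times> nat) \<Rightarrow> bool" where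
  "gain_graph n E ends \<longleftrightarrow> finite E \<and>
     (\<forall>e\<in>E. fst (ends e) \<in> {1..n} \<and> snd (ends e) \<in> {1..n} \<and> fst (ends e) \<noteq> snd (ends e))"

definition phi :: "('e \<Rightarrow> nat \<times> nat) \<Rightarrow> ('e \<Rightarrow> real) \<Rightarrow> 'e \<Rightarrow> nat \<Rightarrow> nat \<Rightarrow> real" where
  "phi ends gain e u v = (if ends e = (u, v) then gain e else - gain e)"

(* es = [e_0,...,e_{m-1}], vs = [v_0,...,v_{m-1}]: a circle passing v_0 e_0 v_1 e_1 ... v_{m-1} e_{m-1} v_0 *)
definition is_circle :: "('e \<Rightarrow> nat \<times> nat) \<Rightarrow> 'e list \<Rightarrow> nat list \<Rightarrow> bool" where
  "is_circle ends es vs \<longleftrightarrow> length es = length vs \<and> length es \<ge> 2 \<and> distinct es \<and> distinct vs \<and>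
     (\<forall>k < length es. ends (es ! k) = (vs ! k, vs ! ((k + 1) mod length vs))
                    \<or> ends (es ! k) = (vs ! ((k + 1) mod length vs), vs ! k))"

definition circle_gain :: "('e \<Rightarrow> nat \<times> nat) \<Rightarrow> ('e \<Rightarrow> real) \<Rightarrow> 'e list \<Rightarrow> nat list \<Rightarrow> real" where
  "circle_gain ends gain es vs = (\<Sum>k < length es. phi ends gain (es ! k) (vs ! k) (vs ! ((k + 1) mod length vs)))"

definition balanced :: "('e \<Rightarrow> nat \<times> nat) \<Rightarrow> ('e \<Rightarrow> real) \<Rightarrow> 'e set \<Rightarrow> bool" where
  "balanced ends gain S \<longleftrightarrow>
     (\<forall>es vs. is_circle ends es vs \<and> set es \<subseteq> S \<longrightarrow> circle_gain ends gain es vs = 0)"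

definition is_forest :: "('e \<Rightarrow> nat \<times> nat) \<Rightarrow> 'e set \<Rightarrow> bool" where
  "is_forest ends S \<longleftrightarrow> \<not> (\<exists>es vs. is_circle ends es vs \<and> set es \<subseteq> S)"

(* "same component" relation of the graph ({1..n}, R), R a set of (unordered, given as ordered) pairs *)
definition comp_rel :: "nat \<Rightarrow> (nat \<times> nat) set \<Rightarrow> (nat \<times> nat) set" where
  "comp_rel n R = {(u, v). u \<in> {1..n} \<and> v \<in> {1..n} \<and> (u, v) \<in> (R \<union> R\<inverse>)\<^sup>*}"

(* number of components, isolated vertices included *)
definition ncomp :: "nat \<Rightarrow> (nat \<times> nat) set \<Rightarrow> nat" where
  "ncomp n R = card ({1..n} // comp_rel n R)"

definition ncomp_edges :: "nat \<Rightarrow> ('e \<Rightarrow> nat \<times> nat) \<Rightarrow> 'e set \<Rightarrow> nat" where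
  "ncomp_edges n ends S = ncomp n (ends ` S)"

definition balanced_flat :: "nat \<Rightarrow> 'e set \<Rightarrow> ('e \<Rightarrow> nat \<times> nat) \<Rightarrow> ('e \<Rightarrow> real) \<Rightarrow> 'e set \<Rightarrow> bool" where
  "balanced_flat n E ends gain S \<longleftrightarrow> S \<subseteq> E \<and> balanced ends gain S \<and>
     (\<forall>e \<in> E - S. (fst (ends e), snd (ends e)) \<in> comp_rel n (ends ` S)
                  \<longrightarrow> \<not> balanced ends gain (insert e S))"

definition flat_rank :: "nat \<Rightarrow> ('e \<Rightarrow> nat \<times> nat) \<Rightarrow> 'e set \<Rightarrow> nat" where
  "flat_rank n ends S = n - ncomp_edges n ends S"

definition psi :: "(nat \<Rightarrow> 'a::euclidean_space) \<Rightarrow> nat \<Rightarrow> nat \<Rightarrow> 'a \<Rightarrow> real" where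
  "psi Q i j P = (dist P (Q i))\<^sup>2 - (dist P (Q j))\<^sup>2"

definition hyp :: "(nat \<Rightarrow> 'a::euclidean_space) \<Rightarrow> ('e \<Rightarrow> nat \<times> nat) \<Rightarrow> ('e \<Rightarrow> real) \<Rightarrow> 'e \<Rightarrow> 'a set" where
  "hyp Q ends gain e = {P. psi Q (fst (ends e)) (snd (ends e)) P = phi ends gain e (fst (ends e)) (snd (ends e))}"

(* \<L>(\<H>): nonempty intersections of subsets of \<H> (empty intersection = whole space) *)
definition lattice_of :: "(nat \<Rightarrow> 'a::euclidean_space) \<Rightarrow> 'e set \<Rightarrow> ('e \<Rightarrow> nat \<times> nat) \<Rightarrow> ('e \<Rightarrow> real) \<Rightarrow> 'a set set" where
  "lattice_of Q E ends gain = {s. s \<noteq> {} \<and> (\<exists>A \<subseteq> E. s = (\<Inter>e\<in>A. hyp Q ends gain e))}"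

definition edges_of :: "(nat \<Rightarrow> 'a::euclidean_space) \<Rightarrow> 'e set \<Rightarrow> ('e \<Rightarrow> nat \<times> nat) \<Rightarrow> ('e \<Rightarrow> real) \<Rightarrow> 'a set \<Rightarrow> 'e set" where
  "edges_of Q E ends gain s = {e \<in> E. s \<subseteq> hyp Q ends gain e}"

(* The ideal point p_ij of line Q_iQ_j is the projective point
   of the direction Q_j - Q_i; the projective span of a set of ideal points has
   projective dimension (linear dimension of the span of the directions) - 1.
   So "proj. dim = min(n - c(T), d) - 1" is "dim span = min(n - c(T), d)". *)
definition ideal_general_position :: "nat \<Rightarrow> (nat \<Rightarrow> 'a::euclidean_space) \<Rightarrow> bool" where
  "ideal_general_position n Q \<longleftrightarrow> inj_on Q {1..n} \<and>
     (\<forall>T \<subseteq> {(i, j). i \<in> {1..n} \<and> j \<in> {1..n} \<and> i < j}.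
        dim ((\<lambda>(i, j). Q j - Q i) ` T) = min (n - ncomp n T) DIM('a))"

(* general position w.r.t. \<Phi>: s \<mapsto> E(s) is a poset isomorphism from \<L>(\<H>) (reverse inclusion)
   onto the balanced flats of rank \<le> d (inclusion) *)
definition general_position :: "nat \<Rightarrow> 'e set \<Rightarrow> ('e \<Rightarrow> nat \<times> nat) \<Rightarrow> ('e \<Rightarrow> real) \<Rightarrow> (nat \<Rightarrow> 'a::euclidean_space) \<Rightarrow> bool" where
  "general_position n E ends gain Q \<longleftrightarrow>
     bij_betw (edges_of Q E ends gain) (lattice_of Q E ends gain)
        {S. balanced_flat n E ends gain S \<and> flat_rank n ends S \<le> DIM('a)} \<and>
     (\<forall>s \<in> lattice_of Q E ends gain. \<forall>t \<in> lattice_of Q E ends gain.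
        t \<subseteq> s \<longleftrightarrow> edges_of Q E ends gain s \<subseteq> edges_of Q E ends gain t)"

end

theory Submission
  imports Defs
begin

text \<open>If a point \<open>P\<close> lies on the hyperplanes \<open>h(e)\<close> of an edge set, then every such edge
  \<open>e = ij\<close> has gain \<open>p i - p j\<close> with the potential \<open>p i = d(P,Q\<^sub>i)\<^sup>2\<close>; hence the edge set is
  balanced, and an edge closing a circle in it lies over \<open>P\<close> exactly when adding it keeps
  balance. So \<open>E(s)\<close> is a balanced flat, and the forest hypothesis bounds its rank by \<open>d\<close>.
  Conversely, let \<open>S\<close> be a balanced flat of rank at most \<open>d\<close> and \<open>F\<close> a spanning forest of it.
  As \<open>\<psi>\<^sub>i\<^sub>j\<close> is affine with linear part \<open>2\<langle>P, Q\<^sub>j - Q\<^sub>i\<rangle>\<close>, and the directions \<open>Q\<^sub>j - Q\<^sub>i\<close>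
  of the edges of \<open>F\<close> are independent by ideal general position, the hyperplanes of \<open>F\<close>
  meet in some \<open>P\<close>, which by balance lies on all \<open>h(e)\<close>, \<open>e \<in> S\<close>. An edge \<open>e \<notin> S\<close> whose
  hyperplane contains \<open>s = \<Inter>\<^sub>e\<^sub>\<in>\<^sub>S h(e)\<close> would either close a circle (contradicting that \<open>S\<close>
  is a flat), or extend \<open>F\<close> to a forest of \<open>d + 1\<close> edges through \<open>P\<close> (excluded), or have a
  direction independent of those of \<open>F\<close>, impossible because translating \<open>P\<close> orthogonally to
  the directions of \<open>F\<close> stays inside \<open>s\<close>. Thus \<open>E(\<Inter>\<^sub>e\<^sub>\<in>\<^sub>S h(e)) = S\<close>.\<close>

abbreviation conn :: "(nat \<times> nat) set \<Rightarrow> (nat \<times> nat) set" where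
  "conn R \<equiv> (R \<union> R\<inverse>)\<^sup>*"

lemma conn_sym: "(x, y) \<in> conn R \<Longrightarrow> (y, x) \<in> conn R"
  by (metis converse_Un converse_converse rtrancl_converseI sup_commute)

lemma conn_eqI:
  assumes "R1 \<subseteq> conn R2" and "R2 \<subseteq> conn R1"
  shows "conn R1 = conn R2"
proof -
  have "R1 \<union> R1\<inverse> \<subseteq> conn R2" and "R2 \<union> R2\<inverse> \<subseteq> conn R1"
    using assms conn_sym by auto
  then show ?thesis by (meson rtrancl_subset_rtrancl subset_antisym)
qed

lemma conn_insert_absorb: "p \<in> conn R \<Longrightarrow> conn (insert p R) = conn R"
  by (rule conn_eqI) auto

lemma conn_insert_cong:
  assumes "conn R1 = conn R2"
  shows "conn (insert p R1) = conn (insert p R2)"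
proof -
  have "conn R \<subseteq> conn (insert p R)" for R :: "(nat \<times> nat) set"
    by (rule rtrancl_mono) auto
  then show ?thesis
    using assms by (intro conn_eqI) auto
qed

lemma conn_insert:
  "conn (insert (a, b) R) = conn R \<union> {(x, y). (x, a) \<in> conn R \<and> (b, y) \<in> conn R}
     \<union> {(x, y). (x, b) \<in> conn R \<and> (a, y) \<in> conn R}"
proof -
  have sym: "insert (a, b) R \<union> (insert (a, b) R)\<inverse> = insert (a, b) (insert (b, a) (R \<union> R\<inverse>))"
    by auto
  have trans: "\<And>x y z. (x, y) \<in> conn R \<Longrightarrow> (y, z) \<in> conn R \<Longrightarrow> (x, z) \<in> conn R"
    by (rule rtrancl_trans)
  show ?thesis
    unfolding sym rtrancl_insert
    by (rule set_eqI, clarsimp simp only: Un_iff mem_Collect_eq split_paired_all case_prod_conv)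
      (use trans rtrancl.rtrancl_refl in meson)
qed

lemma comp_rel_conn: "comp_rel n R = {(u, v). u \<in> {1..n} \<and> v \<in> {1..n} \<and> (u, v) \<in> conn R}"
  by (simp add: comp_rel_def)

lemma ncomp_cong: "conn R1 = conn R2 \<Longrightarrow> ncomp n R1 = ncomp n R2"
  by (simp add: ncomp_def comp_rel_def)

lemma equiv_comp_rel: "equiv {1..n} (comp_rel n R)"
  unfolding equiv_def refl_on_def sym_def trans_def comp_rel_def
  using conn_sym by (auto intro: rtrancl_trans)

lemma ncomp_empty: "ncomp n {} = n"
proof -
  have "comp_rel n {} = Id_on {1..n}"
    by (auto simp: comp_rel_def)
  then have "{1..n} // comp_rel n {} = (\<lambda>x. {x}) ` {1..n}"
    by (auto simp: quotient_def)
  then show ?thesis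
    unfolding ncomp_def by (simp add: card_image)
qed

lemma comp_rel_insert_Image:
  fixes R :: "(nat \<times> nat) set"
  assumes "a \<in> {1..n}" "b \<in> {1..n}" "x \<in> {1..n}"
  defines "A \<equiv> comp_rel n R `` {a}" and "B \<equiv> comp_rel n R `` {b}"
  shows "comp_rel n (insert (a, b) R) `` {x} = (if x \<in> A \<union> B then A \<union> B else comp_rel n R `` {x})"
proof -
  have trans: "\<And>x y z. (x, y) \<in> conn R \<Longrightarrow> (y, z) \<in> conn R \<Longrightarrow> (x, z) \<in> conn R"
    by (rule rtrancl_trans)
  show ?thesis
  proof (cases "x \<in> A \<union> B")
    case True
    then show ?thesis
      using assms unfolding comp_rel_conn conn_insert
      by (simp add: set_eq_iff) (use trans conn_sym in meson)
  next
    case False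
    then show ?thesis
      using assms unfolding comp_rel_conn conn_insert
      by (simp add: set_eq_iff) (use trans conn_sym in meson)
  qed
qed

lemma quotient_comp_rel_insert:
  fixes R :: "(nat \<times> nat) set"
  assumes a: "a \<in> {1..n}" and b: "b \<in> {1..n}"
  defines "A \<equiv> comp_rel n R `` {a}" and "B \<equiv> comp_rel n R `` {b}"
  shows "{1..n} // comp_rel n (insert (a, b) R) = insert (A \<union> B) ({1..n} // comp_rel n R - {A, B})"
    (is "?L = ?R")
proof -
  let ?c = "comp_rel n R" and ?c' = "comp_rel n (insert (a, b) R)"
  note cls = comp_rel_insert_Image[OF a b, of _ R, folded A_def B_def]
  have eqv: "equiv {1..n} ?c"
    by (rule equiv_comp_rel)
  have other_class: "?c `` {x} \<noteq> A \<and> ?c `` {x} \<noteq> B \<longleftrightarrow> x \<notin> A \<union> B" if "x \<in> {1..n}" for x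
  proof -
    have "x \<in> ?c `` {y} \<longleftrightarrow> (x, y) \<in> ?c" for y
      using conn_sym[of x y R] conn_sym[of y x R] by (auto simp: comp_rel_def)
    then have "x \<in> ?c `` {y} \<longleftrightarrow> ?c `` {x} = ?c `` {y}" if "y \<in> {1..n}" for y
      using eq_equiv_class_iff[OF eqv \<open>x \<in> {1..n}\<close> that] by simp
    then show ?thesis
      unfolding A_def B_def using a b by blast
  qed
  show ?thesis
  proof
    show "?L \<subseteq> ?R"
    proof
      fix X assume "X \<in> ?L"
      then obtain x where x: "x \<in> {1..n}" "X = ?c' `` {x}"
        by (auto simp: quotient_def)
      show "X \<in> ?R"
      proof (cases "x \<in> A \<union> B")
        case True
        then show ?thesis
          using cls[OF x(1)] x(2) by simp
      next
        case False
        then show ?thesis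
          using cls[OF x(1)] other_class[OF x(1)] x by (simp add: quotientI)
      qed
    qed
  next
    have "a \<in> A"
      using a by (auto simp: A_def comp_rel_def)
    then have "A \<union> B \<in> ?L"
      using cls[OF a] a by (auto simp: quotient_def)
    moreover have "X \<in> ?L" if X: "X \<in> {1..n} // ?c" "X \<noteq> A" "X \<noteq> B" for X
    proof -
      obtain x where x: "x \<in> {1..n}" "X = ?c `` {x}"
        using X(1) unfolding quotient_def by blast
      then have "?c' `` {x} = X"
        using cls[OF x(1)] other_class[OF x(1)] X by auto
      then show ?thesis
        using x by (auto simp: quotient_def)
    qed
    ultimately show "?R \<subseteq> ?L"
      by blast
  qed
qed

lemma ncomp_insert:
  assumes a: "a \<in> {1..n}" and b: "b \<in> {1..n}" and not_conn: "(a, b) \<notin> conn R"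
  shows "ncomp n (insert (a, b) R) + 1 = ncomp n R"
proof -
  let ?c = "comp_rel n R"
  define A where "A = ?c `` {a}"
  define B where "B = ?c `` {b}"
  have eqv: "equiv {1..n} ?c"
    by (rule equiv_comp_rel)
  have AQ: "A \<in> {1..n} // ?c" and BQ: "B \<in> {1..n} // ?c"
    using a b by (auto simp: A_def B_def quotient_def)
  have "b \<in> B" and "b \<notin> A"
    using b not_conn by (auto simp: A_def B_def comp_rel_def)
  then have AB: "A \<noteq> B"
    by blast
  have fin: "finite ({1..n} // ?c)"
    by (rule finite_quotient) (auto simp: comp_rel_def)
  have "A \<union> B \<notin> {1..n} // ?c - {A, B}"
  proof
    assume "A \<union> B \<in> {1..n} // ?c - {A, B}"
    then have "A \<union> B \<in> {1..n} // ?c" and "A \<union> B \<noteq> A"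
      by auto
    moreover have "A \<noteq> {}"
      using AQ eqv in_quotient_imp_non_empty by blast
    ultimately show False
      using quotient_disj[OF eqv AQ] by blast
  qed
  then have "card ({1..n} // comp_rel n (insert (a, b) R)) = card ({1..n} // ?c - {A, B}) + 1"
    unfolding quotient_comp_rel_insert[OF a b] A_def[symmetric] B_def[symmetric] using fin by simp
  moreover have "card ({1..n} // ?c - {A, B}) + 2 = card ({1..n} // ?c)"
  proof -
    have "card {A, B} \<le> card ({1..n} // ?c)"
      using AQ BQ fin by (intro card_mono) auto
    then show ?thesis
      using AQ BQ AB fin by (simp add: card_Diff_subset)
  qed
  ultimately show ?thesis
    unfolding ncomp_def by simp
qed

lemma sum_cyclic_differences:
  fixes g :: "nat \<Rightarrow> 'a::ab_group_add"
  assumes "0 < m"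
  shows "(\<Sum>k<m. g k - g ((k + 1) mod m)) = 0"
proof -
  obtain m' where m: "m = Suc m'"
    using assms by (cases m) auto
  have "(\<Sum>k<m. g ((k + 1) mod m)) = (\<Sum>k<m'. g ((k + 1) mod m)) + g 0"
    unfolding m by (simp add: sum.lessThan_Suc)
  also have "(\<Sum>k<m'. g ((k + 1) mod m)) = (\<Sum>k<m'. g (Suc k))"
    by (rule sum.cong) (auto simp: m)
  also have "(\<Sum>k<m'. g (Suc k)) + g 0 = (\<Sum>k<m. g k)"
    unfolding m by (simp only: sum.lessThan_Suc_shift add.commute)
  finally show ?thesis
    by (simp add: sum_subtractf)
qed

definition potential :: "(nat \<Rightarrow> 'a::euclidean_space) \<Rightarrow> 'a \<Rightarrow> nat \<Rightarrow> real" where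
  "potential Q P i = (dist P (Q i))\<^sup>2"

lemma mem_hyp_iff_potential:
  "P \<in> hyp Q ends gain e \<longleftrightarrow> potential Q P (fst (ends e)) - potential Q P (snd (ends e)) = gain e"
  by (simp add: hyp_def psi_def phi_def potential_def)

lemma phi_eq_potential_diff:
  assumes "P \<in> hyp Q ends gain e" and "ends e = (u, w) \<or> ends e = (w, u)"
  shows "phi ends gain e u w = potential Q P u - potential Q P w"
proof (cases "ends e = (u, w)")
  case True
  then show ?thesis
    using assms(1) unfolding mem_hyp_iff_potential phi_def by simp
next
  case False
  then have "ends e = (w, u)"
    using assms(2) by blast
  then show ?thesis
    using assms(1) False unfolding mem_hyp_iff_potential phi_def by simp
qed

text \<open>Going around the circle, the edges through \<open>P\<close> contribute potential differences, which
  telescope; only the defect of the last edge remains.\<close>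

lemma circle_gain_if_common_point_but_last:
  assumes circle: "is_circle ends es vs"
    and P: "\<And>k. k < length es - 1 \<Longrightarrow> P \<in> hyp Q ends gain (es ! k)"
  defines "l \<equiv> length es - 1"
  shows "circle_gain ends gain es vs
    = phi ends gain (es ! l) (vs ! l) (vs ! 0) - (potential Q P (vs ! l) - potential Q P (vs ! 0))"
proof -
  let ?m = "length es" and ?p = "potential Q P"
  have m: "2 \<le> ?m" "length vs = ?m"
    using circle by (auto simp: is_circle_def)
  define defect where "defect = phi ends gain (es ! l) (vs ! l) (vs ! 0) - (?p (vs ! l) - ?p (vs ! 0))"
  have "circle_gain ends gain es vs
      = (\<Sum>k<?m. (?p (vs ! k) - ?p (vs ! ((k + 1) mod ?m))) + (if k = l then defect else 0))"
    unfolding circle_gain_def m(2)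
  proof (rule sum.cong)
    fix k assume k: "k \<in> {..<?m}"
    show "phi ends gain (es ! k) (vs ! k) (vs ! ((k + 1) mod ?m))
        = (?p (vs ! k) - ?p (vs ! ((k + 1) mod ?m))) + (if k = l then defect else 0)"
    proof (cases "k = l")
      case True
      then have "k + 1 = ?m"
        using m(1) l_def by simp
      then have "(k + 1) mod ?m = 0"
        by simp
      then show ?thesis
        using True by (simp add: defect_def)
    next
      case False
      then have "P \<in> hyp Q ends gain (es ! k)"
        using P k l_def by simp
      then have "phi ends gain (es ! k) (vs ! k) (vs ! ((k + 1) mod ?m))
          = ?p (vs ! k) - ?p (vs ! ((k + 1) mod ?m))"
        by (rule phi_eq_potential_diff) (use circle k m(2) in \<open>auto simp: is_circle_def\<close>)
      then show ?thesis
        using False by simp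
    qed
  qed simp
  also have "\<dots> = (\<Sum>k<?m. ?p (vs ! k) - ?p (vs ! ((k + 1) mod ?m))) + defect"
    using m(1) l_def by (simp add: sum.distrib)
  also have "\<dots> = defect"
    using sum_cyclic_differences[of ?m "\<lambda>k. ?p (vs ! k)"] m(1) by fastforce
  finally show ?thesis
    unfolding defect_def .
qed

lemma balanced_if_common_point:
  assumes P: "\<forall>e\<in>S. P \<in> hyp Q ends gain e"
  shows "balanced ends gain S"
  unfolding balanced_def
proof (intro allI impI)
  fix es vs
  assume circle: "is_circle ends es vs \<and> set es \<subseteq> S"
  define l where "l = length es - 1"
  have m: "2 \<le> length es" "length vs = length es"
    using circle by (auto simp: is_circle_def)
  then have "l < length es" and "l + 1 = length vs"
    by (simp_all add: l_def)
  then have wrap: "(l + 1) mod length vs = 0"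
    by simp
  have "ends (es ! l) = (vs ! l, vs ! ((l + 1) mod length vs))
      \<or> ends (es ! l) = (vs ! ((l + 1) mod length vs), vs ! l)"
    using circle \<open>l < length es\<close> unfolding is_circle_def by blast
  moreover have on_P: "P \<in> hyp Q ends gain (es ! k)" if "k < length es" for k
    using circle P that by (meson nth_mem subsetD)
  ultimately have "phi ends gain (es ! l) (vs ! l) (vs ! 0) = potential Q P (vs ! l) - potential Q P (vs ! 0)"
    using \<open>l < length es\<close> unfolding wrap by (intro phi_eq_potential_diff) auto
  then show "circle_gain ends gain es vs = 0"
    using circle_gain_if_common_point_but_last[of ends es vs P Q gain] circle on_P
    unfolding l_def by simp
qed

lemma balanced_subset: "balanced ends gain S \<Longrightarrow> T \<subseteq> S \<Longrightarrow> balanced ends gain T"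
  unfolding balanced_def by blast

lemma rtrancl_imp_distinct_path:
  assumes "(x, y) \<in> R\<^sup>*"
  shows "\<exists>vs. vs \<noteq> [] \<and> hd vs = x \<and> last vs = y \<and> distinct vs
           \<and> (\<forall>k. Suc k < length vs \<longrightarrow> (vs ! k, vs ! Suc k) \<in> R)"
  using assms
proof (induction rule: converse_rtrancl_induct)
  case base
  then show ?case
    by (intro exI[of _ "[y]"]) auto
next
  case (step x z)
  then obtain vs where vs: "vs \<noteq> []" "hd vs = z" "last vs = y" "distinct vs"
      "\<forall>k. Suc k < length vs \<longrightarrow> (vs ! k, vs ! Suc k) \<in> R"
    by blast
  show ?case
  proof (cases "x \<in> set vs")
    case False
    have "\<forall>k. Suc k < length (x # vs) \<longrightarrow> ((x # vs) ! k, (x # vs) ! Suc k) \<in> R"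
    proof (intro allI impI)
      fix k assume "Suc k < length (x # vs)"
      then show "((x # vs) ! k, (x # vs) ! Suc k) \<in> R"
        using vs step(1) by (cases k) (auto simp: hd_conv_nth)
    qed
    then show ?thesis
      using False vs by (intro exI[of _ "x # vs"]) auto
  next
    case True
    then obtain i where i: "i < length vs" "vs ! i = x"
      by (auto simp: in_set_conv_nth)
    show ?thesis
    proof (intro exI[of _ "drop i vs"] conjI allI impI)
      show "drop i vs \<noteq> []" and "hd (drop i vs) = x"
        using i by (simp_all add: hd_drop_conv_nth)
      show "last (drop i vs) = y" and "distinct (drop i vs)"
        using i vs by simp_all
      fix k assume "Suc k < length (drop i vs)"
      then show "(drop i vs ! k, drop i vs ! Suc k) \<in> R"
        using vs(5) i by (simp add: add.commute)
    qed
  qed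
qed

lemma is_forest_empty: "is_forest ends {}"
  by (auto simp: is_forest_def is_circle_def)

lemma is_forest_subset: "is_forest ends F \<Longrightarrow> G \<subseteq> F \<Longrightarrow> is_forest ends G"
  by (auto simp: is_forest_def)

lemma conn_around_circle:
  assumes circle: "is_circle ends es vs" and p: "p < length es"
    and others: "\<forall>k<length es. k \<noteq> p \<longrightarrow> es ! k \<in> F"
  shows "(vs ! ((p + 1) mod length es), vs ! p) \<in> conn (ends ` F)"
proof -
  let ?m = "length es"
  have m: "2 \<le> ?m" "length vs = ?m"
    using circle by (auto simp: is_circle_def)
  have step: "(vs ! k, vs ! ((k + 1) mod ?m)) \<in> conn (ends ` F)" if "k < ?m" "k \<noteq> p" for k
  proof -
    have "ends (es ! k) \<in> ends ` F"
      using others that by blast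
    moreover have "ends (es ! k) = (vs ! k, vs ! ((k + 1) mod ?m))
        \<or> ends (es ! k) = (vs ! ((k + 1) mod ?m), vs ! k)"
      using circle that m unfolding is_circle_def by auto
    ultimately show ?thesis
      by auto
  qed
  have walk: "(vs ! ((p + 1) mod ?m), vs ! ((p + 1 + t) mod ?m)) \<in> conn (ends ` F)"
    if "t < ?m" for t
    using that
  proof (induction t)
    case 0
    then show ?case by simp
  next
    case (Suc t)
    let ?k = "(p + 1 + t) mod ?m"
    have "?k \<noteq> p"
    proof
      assume "?k = p"
      then have "?m dvd Suc t"
        using p mod_eq_dvd_iff_nat[of p "p + 1 + t" ?m] by simp
      then show False
        using Suc.prems nat_dvd_not_less by auto
    qed
    moreover have "?k < ?m"
      using m by (intro mod_less_divisor) linarith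
    ultimately have "(vs ! ?k, vs ! ((p + 1 + Suc t) mod ?m)) \<in> conn (ends ` F)"
      using step[of ?k] by (simp add: mod_Suc_eq)
    then show ?case
      using Suc by (auto intro: rtrancl_trans)
  qed
  have "p + 1 + (?m - 1) = p + ?m"
    using m by simp
  then have "(p + 1 + (?m - 1)) mod ?m = p"
    using p by simp
  then show ?thesis
    using walk[of "?m - 1"] m by simp
qed

lemma is_forest_insert:
  assumes forest: "is_forest ends F" and e: "ends e = (a, b)" and not_conn: "(a, b) \<notin> conn (ends ` F)"
  shows "is_forest ends (insert e F)"
  unfolding is_forest_def
proof
  assume "\<exists>es vs. is_circle ends es vs \<and> set es \<subseteq> insert e F"
  then obtain es vs where circle: "is_circle ends es vs" "set es \<subseteq> insert e F"
    by blast
  have "e \<in> set es"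
    using circle forest unfolding is_forest_def by blast
  then obtain p where p: "p < length es" "es ! p = e"
    by (auto simp: in_set_conv_nth)
  have "distinct es"
    using circle by (simp add: is_circle_def)
  then have "\<forall>k<length es. k \<noteq> p \<longrightarrow> es ! k \<in> F"
    using circle(2) p by (metis insertE nth_eq_iff_index_eq nth_mem subsetD)
  then have "(vs ! ((p + 1) mod length es), vs ! p) \<in> conn (ends ` F)"
    using conn_around_circle circle(1) p(1) by blast
  moreover have "(a, b) = (vs ! p, vs ! ((p + 1) mod length es))
      \<or> (a, b) = (vs ! ((p + 1) mod length es), vs ! p)"
    using circle(1) p e unfolding is_circle_def by auto
  ultimately show False
    using not_conn conn_sym by blast
qed

lemma edges_along_path:
  assumes "\<forall>k. Suc k < length vs \<longrightarrow> (vs ! k, vs ! Suc k) \<in> ends ` F \<union> (ends ` F)\<inverse>"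
    and "distinct vs"
  obtains pes where "length pes = length vs - 1" "distinct pes" "set pes \<subseteq> F"
    "\<And>k. k < length vs - 1 \<Longrightarrow> ends (pes ! k) = (vs ! k, vs ! Suc k) \<or> ends (pes ! k) = (vs ! Suc k, vs ! k)"
proof -
  let ?m = "length vs"
  define sel where "sel k = (SOME f. f \<in> F \<and> (ends f = (vs ! k, vs ! Suc k) \<or> ends f = (vs ! Suc k, vs ! k)))"
    for k
  have sel: "sel k \<in> F \<and> (ends (sel k) = (vs ! k, vs ! Suc k) \<or> ends (sel k) = (vs ! Suc k, vs ! k))"
    if "Suc k < ?m" for k
  proof -
    have "\<exists>f. f \<in> F \<and> (ends f = (vs ! k, vs ! Suc k) \<or> ends f = (vs ! Suc k, vs ! k))"
      using assms(1) that by force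
    then show ?thesis
      unfolding sel_def by (rule someI_ex)
  qed
  have "distinct (map sel [0..<?m - 1])"
    unfolding distinct_conv_nth
  proof (intro allI impI)
    fix i j assume ij: "i < length (map sel [0..<?m - 1])" "j < length (map sel [0..<?m - 1])" "i \<noteq> j"
    then have si: "Suc i < ?m" "Suc j < ?m"
      by auto
    have idx: "vs ! x = vs ! y \<longleftrightarrow> x = y" if "x < ?m" "y < ?m" for x y
      using assms(2) that by (simp add: nth_eq_iff_index_eq)
    have "i < ?m" "j < ?m"
      using si by simp_all
    then have "ends (sel i) \<noteq> ends (sel j)"
      using sel[OF si(1)] sel[OF si(2)] si ij(3) by (auto simp: idx)
    then show "map sel [0..<?m - 1] ! i \<noteq> map sel [0..<?m - 1] ! j"
      using ij by auto
  qed
  moreover have "set (map sel [0..<?m - 1]) \<subseteq> F"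
    using sel by auto
  ultimately show ?thesis
    using that[of "map sel [0..<?m - 1]"] sel by auto
qed

lemma circle_closing_path:
  assumes path: "distinct vs" "2 \<le> length vs" "hd vs = b" "last vs = a"
      "\<forall>k. Suc k < length vs \<longrightarrow> (vs ! k, vs ! Suc k) \<in> ends ` F \<union> (ends ` F)\<inverse>"
    and e: "ends e = (a, b)" "e \<notin> F"
  obtains es where "is_circle ends es vs" "set es \<subseteq> insert e F" "es ! (length vs - 1) = e"
    "\<And>k. k < length vs - 1 \<Longrightarrow> es ! k \<in> F"
proof -
  let ?m = "length vs"
  obtain pes where pes: "length pes = ?m - 1" "distinct pes" "set pes \<subseteq> F"
    "\<And>k. k < ?m - 1 \<Longrightarrow> ends (pes ! k) = (vs ! k, vs ! Suc k) \<or> ends (pes ! k) = (vs ! Suc k, vs ! k)"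
    using edges_along_path[OF path(5,1)] by blast
  define es where "es = pes @ [e]"
  have es_nth: "es ! k = (if k < ?m - 1 then pes ! k else e)" if "k < ?m" for k
    using that pes(1) by (auto simp: es_def nth_append)
  have "vs \<noteq> []"
    using path(2) by auto
  then have first: "vs ! 0 = b" and final: "vs ! (?m - 1) = a"
    using path(3,4) by (simp_all add: hd_conv_nth last_conv_nth)
  have next_mod: "(k + 1) mod ?m = (if k < ?m - 1 then Suc k else 0)" if "k < ?m" for k
  proof (cases "k < ?m - 1")
    case False
    then have "k + 1 = ?m"
      using that by linarith
    then show ?thesis
      using False by simp
  qed simp
  have "is_circle ends es vs"
    unfolding is_circle_def
  proof (intro conjI allI impI)
    show "length es = length vs" and "2 \<le> length es"
      using pes(1) path(2) by (simp_all add: es_def)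
    show "distinct es"
      using pes(2,3) e(2) by (auto simp: es_def)
    show "distinct vs"
      by (rule path(1))
    fix k assume k: "k < length es"
    then have "k < ?m"
      using pes(1) path(2) by (simp add: es_def)
    show "ends (es ! k) = (vs ! k, vs ! ((k + 1) mod length vs))
        \<or> ends (es ! k) = (vs ! ((k + 1) mod length vs), vs ! k)"
    proof (cases "k < ?m - 1")
      case True
      then show ?thesis
        using pes(4)[of k] next_mod[of k] es_nth[of k] \<open>k < ?m\<close> by auto
    next
      case False
      then have "k = ?m - 1"
        using \<open>k < ?m\<close> by simp
      then show ?thesis
        using next_mod[of k] es_nth[of k] \<open>k < ?m\<close> e(1) first final by auto
    qed
  qed
  moreover have "set es \<subseteq> insert e F"
    using pes(3) by (auto simp: es_def)
  moreover have "es ! (?m - 1) = e" and "\<And>k. k < ?m - 1 \<Longrightarrow> es ! k \<in> F"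
    using es_nth pes(1,3) path(2) by (auto simp: es_def nth_append)
  ultimately show ?thesis
    using that by blast
qed

lemma not_balanced_insert_if_common_point:
  assumes F: "\<forall>f\<in>F. P \<in> hyp Q ends gain f"
    and e: "P \<notin> hyp Q ends gain e" "ends e = (a, b)" "a \<noteq> b"
    and conn: "(a, b) \<in> conn (ends ` F)"
  shows "\<not> balanced ends gain (insert e F)"
proof -
  obtain vs where vs: "vs \<noteq> []" "hd vs = b" "last vs = a" "distinct vs"
      "\<forall>k. Suc k < length vs \<longrightarrow> (vs ! k, vs ! Suc k) \<in> ends ` F \<union> (ends ` F)\<inverse>"
    using rtrancl_imp_distinct_path[OF conn_sym[OF conn]] by blast
  have "length vs \<noteq> 1"
    using vs(1-3) e(3) by (auto simp: hd_conv_nth last_conv_nth)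
  moreover have "length vs \<noteq> 0"
    using vs(1) by simp
  ultimately have m: "2 \<le> length vs"
    by linarith
  have "e \<notin> F"
    using F e(1) by blast
  then obtain es where es: "is_circle ends es vs" "set es \<subseteq> insert e F" "es ! (length vs - 1) = e"
      "\<And>k. k < length vs - 1 \<Longrightarrow> es ! k \<in> F"
    using circle_closing_path[OF vs(4) m vs(2,3,5) e(2)] by metis
  have "length es = length vs"
    using es(1) by (simp add: is_circle_def)
  then have "\<And>k. k < length es - 1 \<Longrightarrow> P \<in> hyp Q ends gain (es ! k)"
    using F es(4) by simp
  from circle_gain_if_common_point_but_last[OF es(1) this]
  have "circle_gain ends gain es vs = gain e - (potential Q P a - potential Q P b)"
    using vs \<open>length es = length vs\<close> es(3) e(2) by (simp add: hd_conv_nth last_conv_nth phi_def)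
  also have "\<dots> \<noteq> 0"
    using e(1,2) unfolding mem_hyp_iff_potential by simp
  finally show ?thesis
    using es(1,2) unfolding balanced_def by blast
qed

lemma forest_insert_joining:
  assumes forest: "is_forest ends F" "finite F" "card F + ncomp n (ends ` F) = n"
    and e: "ends e = (a, b)" "a \<in> {1..n}" "b \<in> {1..n}"
    and not_conn: "(a, b) \<notin> conn (ends ` F)"
  shows "e \<notin> F" and "is_forest ends (insert e F)"
    and "card (insert e F) + ncomp n (ends ` insert e F) = n"
proof -
  show "e \<notin> F"
  proof
    assume "e \<in> F"
    then have "(a, b) \<in> conn (ends ` F)"
      using e(1) by (intro r_into_rtrancl UnI1) force
    then show False
      using not_conn by simp
  qed
  then show "card (insert e F) + ncomp n (ends ` insert e F) = n"
    using ncomp_insert[OF e(2,3) not_conn] forest(2,3) e(1) by simp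
  show "is_forest ends (insert e F)"
    using forest(1) e(1) not_conn by (rule is_forest_insert)
qed

lemma spanning_forest:
  assumes "finite S" and "\<forall>e\<in>S. fst (ends e) \<in> {1..n} \<and> snd (ends e) \<in> {1..n}"
  shows "\<exists>F\<subseteq>S. is_forest ends F \<and> conn (ends ` F) = conn (ends ` S) \<and> card F + ncomp n (ends ` F) = n"
  using assms
proof (induction S rule: finite_induct)
  case empty
  then show ?case
    using is_forest_empty ncomp_empty by auto
next
  case (insert e S)
  then obtain F where F: "F \<subseteq> S" "is_forest ends F" "conn (ends ` F) = conn (ends ` S)"
      "card F + ncomp n (ends ` F) = n"
    by auto
  obtain a b where ab: "ends e = (a, b)"
    by fastforce
  have ab_range: "a \<in> {1..n}" "b \<in> {1..n}"
    using insert.prems ab by (metis fst_conv snd_conv insertI1)+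
  show ?case
  proof (cases "(a, b) \<in> conn (ends ` F)")
    case True
    then have "conn (ends ` insert e S) = conn (ends ` S)"
      using ab F(3) conn_insert_absorb[of "(a, b)" "ends ` S"] by simp
    then show ?thesis
      using F by (intro exI[of _ F]) auto
  next
    case False
    have "finite F"
      using F(1) insert.hyps(1) by (rule finite_subset)
    then have "is_forest ends (insert e F)" "card (insert e F) + ncomp n (ends ` insert e F) = n"
      using forest_insert_joining[OF F(2) _ F(4) ab ab_range False] by blast+
    moreover have "conn (ends ` insert e F) = conn (ends ` insert e S)"
      using conn_insert_cong[OF F(3), of "(a, b)"] ab by simp
    ultimately show ?thesis
      using F(1) by (intro exI[of _ "insert e F"]) auto
  qed
qed

lemma psi_affine:
  "psi Q a b P = 2 * (P \<bullet> (Q b - Q a)) + (Q a \<bullet> Q a - Q b \<bullet> Q b)"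
  unfolding psi_def dist_norm power2_norm_eq_inner
  by (simp add: inner_simps algebra_simps inner_commute)

lemma psi_translate: "psi Q a b (P + w) = psi Q a b P + 2 * (w \<bullet> (Q b - Q a))"
  unfolding psi_affine by (simp add: inner_add_left)

lemma mem_hyp_iff_psi: "P \<in> hyp Q ends gain e \<longleftrightarrow> psi Q (fst (ends e)) (snd (ends e)) P = gain e"
  by (simp add: hyp_def phi_def)

text \<open>The edge \<open>e\<close> as the pair \<open>i < j\<close> of its ends, which is how ideal general position
  indexes pairs of points, and the corresponding direction \<open>Q\<^sub>j - Q\<^sub>i\<close>.\<close>

definition sorted_ends :: "('e \<Rightarrow> nat \<times> nat) \<Rightarrow> 'e \<Rightarrow> nat \<times> nat" where
  "sorted_ends ends e = (min (fst (ends e)) (snd (ends e)), max (fst (ends e)) (snd (ends e)))"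

definition edge_direction :: "(nat \<Rightarrow> 'a::euclidean_space) \<Rightarrow> ('e \<Rightarrow> nat \<times> nat) \<Rightarrow> 'e \<Rightarrow> 'a" where
  "edge_direction Q ends e = (\<lambda>(i, j). Q j - Q i) (sorted_ends ends e)"

lemma edge_direction_cases:
  "ends e = (a, b) \<Longrightarrow> edge_direction Q ends e = Q b - Q a \<or> edge_direction Q ends e = -(Q b - Q a)"
  by (auto simp: edge_direction_def sorted_ends_def min_def max_def)

lemma inner_edge_direction_eq_0_iff:
  "ends e = (a, b) \<Longrightarrow> w \<bullet> edge_direction Q ends e = 0 \<longleftrightarrow> w \<bullet> (Q b - Q a) = 0"
  using edge_direction_cases[of ends e a b Q] by (auto simp: inner_minus_right inner_diff_right)

lemma conn_sorted_ends: "conn (sorted_ends ends ` F) = conn (ends ` F)"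
proof -
  have swap: "sorted_ends ends f = ends f \<or> sorted_ends ends f = prod.swap (ends f)" for f
    by (cases "ends f") (auto simp: sorted_ends_def min_def max_def)
  have "(x, y) \<in> sorted_ends ends ` F \<union> (sorted_ends ends ` F)\<inverse> \<longleftrightarrow> (x, y) \<in> ends ` F \<union> (ends ` F)\<inverse>"
    for x y
  proof
    assume "(x, y) \<in> sorted_ends ends ` F \<union> (sorted_ends ends ` F)\<inverse>"
    then obtain f where "f \<in> F" "sorted_ends ends f = (x, y) \<or> sorted_ends ends f = (y, x)"
      by auto
    then show "(x, y) \<in> ends ` F \<union> (ends ` F)\<inverse>"
      using swap[of f] by (cases "ends f") (auto intro: rev_image_eqI)
  next
    assume "(x, y) \<in> ends ` F \<union> (ends ` F)\<inverse>"
    then obtain f where "f \<in> F" "ends f = (x, y) \<or> ends f = (y, x)"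
      by auto
    then show "(x, y) \<in> sorted_ends ends ` F \<union> (sorted_ends ends ` F)\<inverse>"
      using swap[of f] by (auto intro: rev_image_eqI)
  qed
  then show ?thesis
    by (metis pred_equals_eq2)
qed

lemma orthogonal_to_conn:
  assumes w: "\<forall>f\<in>F. w \<bullet> edge_direction Q ends f = 0" and xy: "(x, y) \<in> conn (ends ` F)"
  shows "w \<bullet> (Q y - Q x) = 0"
  using xy
proof (induction rule: rtrancl_induct)
  case base
  then show ?case by simp
next
  case (step y z)
  from step(2) obtain f where "f \<in> F" "ends f = (y, z) \<or> ends f = (z, y)"
    by auto
  then have "w \<bullet> (Q z - Q y) = 0 \<or> w \<bullet> (Q y - Q z) = 0"
    using w inner_edge_direction_eq_0_iff by metis
  then have "w \<bullet> (Q z - Q y) = 0"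
    by (auto simp: inner_diff_right)
  moreover have "Q z - Q x = (Q z - Q y) + (Q y - Q x)"
    by simp
  ultimately show ?case
    using step(3) by (simp only: inner_add_right)
qed

lemma dim_edge_directions:
  fixes Q :: "nat \<Rightarrow> 'a::euclidean_space"
  assumes igp: "ideal_general_position n Q"
    and F: "\<forall>e\<in>F. fst (ends e) \<in> {1..n} \<and> snd (ends e) \<in> {1..n} \<and> fst (ends e) \<noteq> snd (ends e)"
  shows "dim (edge_direction Q ends ` F) = min (n - ncomp n (ends ` F)) DIM('a)"
proof -
  have "sorted_ends ends ` F \<subseteq> {(i, j). i \<in> {1..n} \<and> j \<in> {1..n} \<and> i < j}"
    using F by (auto simp: sorted_ends_def min_def max_def)
  then have "dim ((\<lambda>(i, j). Q j - Q i) ` sorted_ends ends ` F) = min (n - ncomp n (sorted_ends ends ` F)) DIM('a)"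
    using igp unfolding ideal_general_position_def by blast
  moreover have "(\<lambda>(i, j). Q j - Q i) ` sorted_ends ends ` F = edge_direction Q ends ` F"
    by (auto simp: edge_direction_def image_image)
  moreover have "ncomp n (sorted_ends ends ` F) = ncomp n (ends ` F)"
    by (rule ncomp_cong[OF conn_sorted_ends])
  ultimately show ?thesis
    by simp
qed

lemma independent_edge_directions:
  fixes Q :: "nat \<Rightarrow> 'a::euclidean_space"
  assumes igp: "ideal_general_position n Q"
    and F: "\<forall>e\<in>F. fst (ends e) \<in> {1..n} \<and> snd (ends e) \<in> {1..n} \<and> fst (ends e) \<noteq> snd (ends e)"
    and "finite F" and "card F + ncomp n (ends ` F) = n" and "card F \<le> DIM('a)"
  shows "inj_on (edge_direction Q ends) F" and "independent (edge_direction Q ends ` F)"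
proof -
  let ?D = "edge_direction Q ends ` F"
  have dim: "dim ?D = card F"
    using dim_edge_directions[OF igp F] assms(4,5) by simp
  moreover have "card ?D \<le> card F"
    using \<open>finite F\<close> by (rule card_image_le)
  moreover have "dim ?D \<le> card ?D"
    using \<open>finite F\<close> by (intro dim_le_card span_superset) auto
  ultimately have card: "card ?D = card F"
    by linarith
  then show "inj_on (edge_direction Q ends) F"
    using eq_card_imp_inj_on[OF \<open>finite F\<close>] by blast
  show "independent ?D"
    using card_eq_dim[of ?D ?D] card dim \<open>finite F\<close> span_superset by simp
qed

lemma inner_equations_solvable:
  fixes B :: "'a::euclidean_space set"
  assumes "independent B"
  shows "\<exists>P. \<forall>b\<in>B. P \<bullet> b = c b"
proof -
  obtain g :: "'a \<Rightarrow> real" where g: "linear g" "\<forall>x\<in>B. g x = c x"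
    using real_vector.linear_independent_extend[OF assms] by blast
  define P where "P = (\<Sum>i\<in>Basis. g i *\<^sub>R i)"
  have "P \<bullet> x = g x" for x
  proof -
    have "g x = g (\<Sum>i\<in>Basis. (x \<bullet> i) *\<^sub>R i)"
      by (simp add: euclidean_representation)
    also have "\<dots> = (\<Sum>i\<in>Basis. (x \<bullet> i) * g i)"
      using g(1) by (simp add: linear_sum linear_scale)
    also have "\<dots> = P \<bullet> x"
      unfolding P_def inner_sum_left inner_scaleR_left by (intro sum.cong) (auto simp: inner_commute)
    finally show ?thesis
      by simp
  qed
  then show ?thesis
    using g(2) by (intro exI[of _ P]) auto
qed

lemma in_span_if_orthogonal_to_annihilator:
  fixes B :: "'a::euclidean_space set"
  assumes "\<And>w. \<forall>b\<in>B. w \<bullet> b = 0 \<Longrightarrow> w \<bullet> v = 0"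
  shows "v \<in> span B"
proof -
  obtain y z where yz: "y \<in> span B" "\<And>w. w \<in> span B \<Longrightarrow> orthogonal z w" "v = y + z"
    using orthogonal_subspace_decomp_exists[of B v] by blast
  have "\<forall>b\<in>B. z \<bullet> b = 0"
    using yz(2) span_base by (auto simp: orthogonal_def)
  then have "z \<bullet> v = 0"
    by (rule assms)
  moreover have "z \<bullet> y = 0"
    using yz(2)[OF yz(1)] by (simp add: orthogonal_def)
  ultimately have "z = 0"
    using yz(3) by (simp add: inner_add_right)
  then show ?thesis
    using yz by simp
qed

lemma Inter_edges_of_eq:
  assumes "s \<in> lattice_of Q E ends gain"
  shows "(\<Inter>e\<in>edges_of Q E ends gain s. hyp Q ends gain e) = s"
proof -
  obtain A where "A \<subseteq> E" "s = (\<Inter>e\<in>A. hyp Q ends gain e)"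
    using assms unfolding lattice_of_def by blast
  then have "A \<subseteq> edges_of Q E ends gain s"
    unfolding edges_of_def by auto
  then show ?thesis
    using \<open>s = (\<Inter>e\<in>A. hyp Q ends gain e)\<close> unfolding edges_of_def by blast
qed

lemma edges_of_subset_iff:
  assumes "s \<in> lattice_of Q E ends gain" and "t \<in> lattice_of Q E ends gain"
  shows "edges_of Q E ends gain s \<subseteq> edges_of Q E ends gain t \<longleftrightarrow> t \<subseteq> s"
proof
  assume "edges_of Q E ends gain s \<subseteq> edges_of Q E ends gain t"
  then have "(\<Inter>e\<in>edges_of Q E ends gain t. hyp Q ends gain e) \<subseteq> (\<Inter>e\<in>edges_of Q E ends gain s. hyp Q ends gain e)"
    by blast
  then show "t \<subseteq> s"
    unfolding Inter_edges_of_eq[OF assms(1)] Inter_edges_of_eq[OF assms(2)] .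
qed (auto simp: edges_of_def)

lemma balanced_flat_edges_of:
  assumes gg: "gain_graph n E ends" and s: "s \<in> lattice_of Q E ends gain"
  shows "balanced_flat n E ends gain (edges_of Q E ends gain s)"
  unfolding balanced_flat_def
proof (intro conjI ballI impI)
  let ?S = "edges_of Q E ends gain s"
  have on_hyps: "\<forall>f\<in>?S. P \<in> hyp Q ends gain f" if "P \<in> s" for P
    using that unfolding edges_of_def by blast
  show "?S \<subseteq> E"
    unfolding edges_of_def by auto
  obtain P where "P \<in> s"
    using s unfolding lattice_of_def by blast
  then show "balanced ends gain ?S"
    by (rule balanced_if_common_point[OF on_hyps])
  fix e assume e: "e \<in> E - ?S" and "(fst (ends e), snd (ends e)) \<in> comp_rel n (ends ` ?S)"
  then have conn: "(fst (ends e), snd (ends e)) \<in> conn (ends ` ?S)"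
    unfolding comp_rel_conn by (simp add: case_prod_beta)
  obtain P' where P': "P' \<in> s" "P' \<notin> hyp Q ends gain e"
    using e unfolding edges_of_def by auto
  have "fst (ends e) \<noteq> snd (ends e)"
    using e gg unfolding gain_graph_def by auto
  then show "\<not> balanced ends gain (insert e ?S)"
    by (rule not_balanced_insert_if_common_point[OF on_hyps[OF P'(1)] P'(2) prod.collapse[symmetric] _ conn])
qed

text \<open>A spanning forest of \<open>E(s)\<close> with more than \<open>d\<close> edges would contain a forest of \<open>d + 1\<close>
  edges whose hyperplanes all contain \<open>s \<noteq> \<emptyset>\<close>.\<close>

lemma flat_rank_edges_of_le:
  fixes Q :: "nat \<Rightarrow> 'a::euclidean_space"
  assumes gg: "gain_graph n E ends"
    and forests: "\<forall>S \<subseteq> E. is_forest ends S \<and> card S = DIM('a) + 1 \<longrightarrow> (\<Inter>e\<in>S. hyp Q ends gain e) = {}"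
    and s: "s \<in> lattice_of Q E ends gain"
  shows "flat_rank n ends (edges_of Q E ends gain s) \<le> DIM('a)"
proof (rule ccontr)
  let ?S = "edges_of Q E ends gain s"
  assume "\<not> flat_rank n ends ?S \<le> DIM('a)"
  then have rank: "n - ncomp n (ends ` ?S) > DIM('a)"
    unfolding flat_rank_def ncomp_edges_def by simp
  have "?S \<subseteq> E"
    unfolding edges_of_def by auto
  have "finite E" and ends: "\<forall>e\<in>E. fst (ends e) \<in> {1..n} \<and> snd (ends e) \<in> {1..n}"
    using gg unfolding gain_graph_def by auto
  then have "finite ?S"
    using \<open>?S \<subseteq> E\<close> finite_subset by blast
  then obtain F where F: "F \<subseteq> ?S" "is_forest ends F" "conn (ends ` F) = conn (ends ` ?S)"
      "card F + ncomp n (ends ` F) = n"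
    using spanning_forest[of ?S ends n] ends \<open>?S \<subseteq> E\<close> by blast
  then have "card F \<ge> DIM('a) + 1"
    using rank ncomp_cong[OF F(3), of n] by linarith
  then obtain F' where F': "F' \<subseteq> F" "card F' = DIM('a) + 1"
    by (meson obtain_subset_with_card_n)
  moreover have "F' \<subseteq> E"
    using F'(1) F(1) \<open>?S \<subseteq> E\<close> by blast
  moreover have "is_forest ends F'"
    using F(2) F'(1) by (rule is_forest_subset)
  ultimately have "(\<Inter>e\<in>F'. hyp Q ends gain e) = {}"
    using forests by blast
  moreover obtain P where "P \<in> s"
    using s unfolding lattice_of_def by blast
  then have "P \<in> (\<Inter>e\<in>F'. hyp Q ends gain e)"
    using F(1) F'(1) unfolding edges_of_def by blast
  ultimately show False
    by blast
qed

text \<open>The hyperplanes of the edges of \<open>F\<close> are \<open>\<langle>P, Q\<^sub>j - Q\<^sub>i\<rangle> = (gain + |Q\<^sub>j|\<^sup>2 - |Q\<^sub>i|\<^sup>2) / 2\<close>, a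
  linear system with independent normals.\<close>

lemma common_point_if_independent_directions:
  assumes inj: "inj_on (edge_direction Q ends) F"
    and indep: "independent (edge_direction Q ends ` F)"
    and loopless: "\<forall>e\<in>F. fst (ends e) \<noteq> snd (ends e)"
  shows "\<exists>P. \<forall>e\<in>F. P \<in> hyp Q ends gain e"
proof -
  define rhs where "rhs e = (gain e - (Q (fst (ends e)) \<bullet> Q (fst (ends e)) - Q (snd (ends e)) \<bullet> Q (snd (ends e)))) / 2"
    for e
  define target where "target e = (if fst (ends e) < snd (ends e) then rhs e else - rhs e)" for e
  obtain P where P: "\<forall>v\<in>edge_direction Q ends ` F. P \<bullet> v = target (inv_into F (edge_direction Q ends) v)"
    using inner_equations_solvable[OF indep, of "\<lambda>v. target (inv_into F (edge_direction Q ends) v)"]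
    by blast
  have "P \<in> hyp Q ends gain e" if e: "e \<in> F" for e
  proof -
    obtain a b where ab: "ends e = (a, b)"
      by fastforce
    have dir: "P \<bullet> edge_direction Q ends e = target e"
      using P e inj by (simp add: inv_into_f_f)
    have "a \<noteq> b"
      using loopless e ab by fastforce
    have "P \<bullet> (Q b - Q a) = rhs e"
    proof (cases "a < b")
      case True
      then show ?thesis
        using dir ab by (simp add: edge_direction_def sorted_ends_def target_def)
    next
      case False
      then have "edge_direction Q ends e = Q a - Q b" and "target e = - rhs e"
        using ab \<open>a \<noteq> b\<close> by (simp_all add: edge_direction_def sorted_ends_def target_def)
      then show ?thesis
        using dir by (simp add: inner_diff_right)
    qed
    then show ?thesis
      using ab by (simp add: mem_hyp_iff_psi psi_affine rhs_def)
  qed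
  then show ?thesis
    by blast
qed

lemma balanced_flat_spanning_forest:
  fixes Q :: "nat \<Rightarrow> 'a::euclidean_space"
  assumes gg: "gain_graph n E ends" and igp: "ideal_general_position n Q"
    and flat: "balanced_flat n E ends gain S" and rank: "flat_rank n ends S \<le> DIM('a)"
  obtains F P where "F \<subseteq> S" "is_forest ends F" "conn (ends ` F) = conn (ends ` S)"
    "card F + ncomp n (ends ` F) = n" "card F \<le> DIM('a)" "\<forall>e\<in>S. P \<in> hyp Q ends gain e"
proof -
  have "S \<subseteq> E" and bal: "balanced ends gain S"
    using flat unfolding balanced_flat_def by auto
  have "finite E"
    and ends: "\<forall>e\<in>E. fst (ends e) \<in> {1..n} \<and> snd (ends e) \<in> {1..n} \<and> fst (ends e) \<noteq> snd (ends e)"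
    using gg unfolding gain_graph_def by auto
  then have "finite S"
    using \<open>S \<subseteq> E\<close> finite_subset by blast
  then obtain F where F: "F \<subseteq> S" "is_forest ends F" "conn (ends ` F) = conn (ends ` S)"
      "card F + ncomp n (ends ` F) = n"
    using spanning_forest[of S ends n] ends \<open>S \<subseteq> E\<close> by blast
  have "card F \<le> DIM('a)"
    using rank F(4) ncomp_cong[OF F(3), of n] unfolding flat_rank_def ncomp_edges_def by linarith
  moreover have ends_F: "\<forall>e\<in>F. fst (ends e) \<in> {1..n} \<and> snd (ends e) \<in> {1..n} \<and> fst (ends e) \<noteq> snd (ends e)"
    using ends F(1) \<open>S \<subseteq> E\<close> by blast
  moreover have "finite F"
    using F(1) \<open>finite S\<close> finite_subset by blast
  ultimately have "inj_on (edge_direction Q ends) F" "independent (edge_direction Q ends ` F)"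
    using independent_edge_directions[OF igp _ _ F(4)] by blast+
  then obtain P where P: "\<forall>e\<in>F. P \<in> hyp Q ends gain e"
    using common_point_if_independent_directions ends_F by blast
  have "P \<in> hyp Q ends gain e" if e: "e \<in> S" for e
  proof (rule ccontr)
    assume off: "P \<notin> hyp Q ends gain e"
    have "(fst (ends e), snd (ends e)) \<in> conn (ends ` S)"
      using e by (intro r_into_rtrancl UnI1) simp
    then have conn: "(fst (ends e), snd (ends e)) \<in> conn (ends ` F)"
      unfolding F(3) .
    have "fst (ends e) \<noteq> snd (ends e)"
      using ends e \<open>S \<subseteq> E\<close> by blast
    then have "\<not> balanced ends gain (insert e F)"
      by (rule not_balanced_insert_if_common_point[OF P off prod.collapse[symmetric] _ conn])
    then show False
      using bal balanced_subset e F(1) by blast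
  qed
  with F \<open>card F \<le> DIM('a)\<close> show ?thesis
    by (intro that) auto
qed

text \<open>Moving \<open>P\<close> by any \<open>w\<close> orthogonal to the directions of \<open>F\<close> keeps it on every \<open>h(f)\<close> with
  \<open>f\<close> spanned by \<open>F\<close>, hence on \<open>h(e)\<close>; so \<open>w\<close> is orthogonal to the direction of \<open>e\<close> too.\<close>

lemma edge_direction_in_span:
  assumes P: "\<forall>f\<in>S. P \<in> hyp Q ends gain f"
    and spanned: "\<forall>f\<in>S. (fst (ends f), snd (ends f)) \<in> conn (ends ` F)"
    and sub: "(\<Inter>f\<in>S. hyp Q ends gain f) \<subseteq> hyp Q ends gain e"
  shows "edge_direction Q ends e \<in> span (edge_direction Q ends ` F)"
proof (rule in_span_if_orthogonal_to_annihilator)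
  fix w assume "\<forall>v\<in>edge_direction Q ends ` F. w \<bullet> v = 0"
  then have w: "\<forall>f\<in>F. w \<bullet> edge_direction Q ends f = 0"
    by blast
  have "P + w \<in> hyp Q ends gain f" if "f \<in> S" for f
    using P spanned that orthogonal_to_conn[OF w] by (simp add: mem_hyp_iff_psi psi_translate)
  then have "P + w \<in> hyp Q ends gain e" and "P \<in> hyp Q ends gain e"
    using sub P by blast+
  then have "w \<bullet> (Q (snd (ends e)) - Q (fst (ends e))) = 0"
    by (simp add: mem_hyp_iff_psi psi_translate)
  then show "w \<bullet> edge_direction Q ends e = 0"
    using inner_edge_direction_eq_0_iff[of ends e "fst (ends e)" "snd (ends e)" w Q] by simp
qed

lemma joining_edge_not_over_Inter:
  fixes Q :: "nat \<Rightarrow> 'a::euclidean_space"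
  assumes gg: "gain_graph n E ends" and igp: "ideal_general_position n Q"
    and forests: "\<forall>S \<subseteq> E. is_forest ends S \<and> card S = DIM('a) + 1 \<longrightarrow> (\<Inter>e\<in>S. hyp Q ends gain e) = {}"
    and F: "F \<subseteq> S" "S \<subseteq> E" "is_forest ends F" "conn (ends ` F) = conn (ends ` S)"
      "card F + ncomp n (ends ` F) = n" "card F \<le> DIM('a)"
    and P: "\<forall>f\<in>S. P \<in> hyp Q ends gain f"
    and e: "e \<in> E" "(fst (ends e), snd (ends e)) \<notin> conn (ends ` S)"
  shows "\<not> (\<Inter>f\<in>S. hyp Q ends gain f) \<subseteq> hyp Q ends gain e"
proof
  assume sub: "(\<Inter>f\<in>S. hyp Q ends gain f) \<subseteq> hyp Q ends gain e"
  obtain a b where ab: "ends e = (a, b)"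
    by fastforce
  have ends: "\<forall>e\<in>E. fst (ends e) \<in> {1..n} \<and> snd (ends e) \<in> {1..n} \<and> fst (ends e) \<noteq> snd (ends e)"
    and "finite E"
    using gg unfolding gain_graph_def by auto
  then have ab_range: "a \<in> {1..n}" "b \<in> {1..n}"
    using e(1) ab by (metis fst_conv snd_conv)+
  have "insert e F \<subseteq> E"
    using e(1) F(1,2) by blast
  then have ends_F: "\<forall>f\<in>insert e F. fst (ends f) \<in> {1..n} \<and> snd (ends f) \<in> {1..n} \<and> fst (ends f) \<noteq> snd (ends f)"
    using ends by blast
  then have ends_F': "\<forall>f\<in>F. fst (ends f) \<in> {1..n} \<and> snd (ends f) \<in> {1..n} \<and> fst (ends f) \<noteq> snd (ends f)"
    by blast
  have "finite F"
    using F(1,2) \<open>finite E\<close> by (meson finite_subset subset_trans)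
  have not_conn: "(a, b) \<notin> conn (ends ` F)"
    unfolding F(4) using e(2) ab by simp
  note joined = forest_insert_joining[OF F(3) \<open>finite F\<close> F(5) ab ab_range not_conn]
  have card: "card (insert e F) = card F + 1"
    using joined(1) \<open>finite F\<close> by simp
  have "P \<in> hyp Q ends gain e"
    using P sub by blast
  show False
  proof (cases "card F = DIM('a)")
    case True
    note joined(2)
    moreover have "card (insert e F) = DIM('a) + 1"
      using True card by simp
    ultimately have "(\<Inter>f\<in>insert e F. hyp Q ends gain f) = {}"
      using forests \<open>insert e F \<subseteq> E\<close> by blast
    moreover have "P \<in> (\<Inter>f\<in>insert e F. hyp Q ends gain f)"
      using P F(1) \<open>P \<in> hyp Q ends gain e\<close> by blast
    ultimately show False
      by blast
  next
    case False
    have "(fst (ends f), snd (ends f)) \<in> conn (ends ` F)" if "f \<in> S" for f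
      using that unfolding F(4) by (intro r_into_rtrancl UnI1) simp
    then have "edge_direction Q ends e \<in> span (edge_direction Q ends ` F)"
      using edge_direction_in_span[OF P _ sub] by blast
    then have "dim (edge_direction Q ends ` insert e F) = dim (edge_direction Q ends ` F)"
      by (simp add: dim_insert)
    moreover have "dim (edge_direction Q ends ` insert e F) = card F + 1"
      using dim_edge_directions[OF igp ends_F] joined(3) card False F(6) by simp
    moreover have "dim (edge_direction Q ends ` F) = card F"
      using dim_edge_directions[OF igp ends_F'] F(5,6) by simp
    ultimately show False
      by simp
  qed
qed

lemma edges_of_Inter_balanced_flat:
  fixes Q :: "nat \<Rightarrow> 'a::euclidean_space"
  assumes gg: "gain_graph n E ends" and igp: "ideal_general_position n Q"
    and forests: "\<forall>S \<subseteq> E. is_forest ends S \<and> card S = DIM('a) + 1 \<longrightarrow> (\<Inter>e\<in>S. hyp Q ends gain e) = {}"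
    and flat: "balanced_flat n E ends gain S" and rank: "flat_rank n ends S \<le> DIM('a)"
  shows "(\<Inter>e\<in>S. hyp Q ends gain e) \<in> lattice_of Q E ends gain"
    and "edges_of Q E ends gain (\<Inter>e\<in>S. hyp Q ends gain e) = S"
proof -
  let ?s = "\<Inter>e\<in>S. hyp Q ends gain e"
  obtain F P where F: "F \<subseteq> S" "is_forest ends F" "conn (ends ` F) = conn (ends ` S)"
      "card F + ncomp n (ends ` F) = n" "card F \<le> DIM('a)" and P: "\<forall>e\<in>S. P \<in> hyp Q ends gain e"
    using balanced_flat_spanning_forest[OF gg igp flat rank] by blast
  have "S \<subseteq> E"
    and closed: "\<And>e. e \<in> E - S \<Longrightarrow> (fst (ends e), snd (ends e)) \<in> comp_rel n (ends ` S)
      \<Longrightarrow> \<not> balanced ends gain (insert e S)"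
    using flat unfolding balanced_flat_def by auto
  show "?s \<in> lattice_of Q E ends gain"
    using P \<open>S \<subseteq> E\<close> unfolding lattice_of_def by blast
  have "e \<in> S" if e: "e \<in> E" "?s \<subseteq> hyp Q ends gain e" for e
  proof (rule ccontr)
    assume "e \<notin> S"
    show False
    proof (cases "(fst (ends e), snd (ends e)) \<in> conn (ends ` S)")
      case True
      moreover have "fst (ends e) \<in> {1..n}" "snd (ends e) \<in> {1..n}"
        using gg e(1) unfolding gain_graph_def by auto
      ultimately have "(fst (ends e), snd (ends e)) \<in> comp_rel n (ends ` S)"
        unfolding comp_rel_conn by (simp add: case_prod_beta)
      then have "\<not> balanced ends gain (insert e S)"
        using closed \<open>e \<notin> S\<close> e(1) by blast
      moreover have "P \<in> hyp Q ends gain e"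
        using P e(2) by blast
      then have "\<forall>f\<in>insert e S. P \<in> hyp Q ends gain f"
        using P by blast
      then have "balanced ends gain (insert e S)"
        by (rule balanced_if_common_point)
      ultimately show False
        by blast
    next
      case False
      then show False
        using joining_edge_not_over_Inter[OF gg igp forests F(1) \<open>S \<subseteq> E\<close> F(2-5) P e(1)] e(2)
        by blast
    qed
  qed
  then show "edges_of Q E ends gain ?s = S"
    using \<open>S \<subseteq> E\<close> unfolding edges_of_def by blast
qed

theorem proposition6p2:
  fixes n :: nat and E :: "'e set" and ends :: "'e \<Rightarrow> nat \<times> nat" and gain :: "'e \<Rightarrow> real"
    and Q :: "nat \<Rightarrow> 'a::euclidean_space"
  assumes "gain_graph n E ends"
    and "ideal_general_position n Q"
    and "\<forall>S \<subseteq> E. is_forest ends S \<and> card S = DIM('a) + 1 \<longrightarrow> (\<Inter>e\<in>S. hyp Q ends gain e) = {}"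
  shows "general_position n E ends gain Q"
proof -
  let ?E = "edges_of Q E ends gain" and ?L = "lattice_of Q E ends gain"
  let ?flats = "{S. balanced_flat n E ends gain S \<and> flat_rank n ends S \<le> DIM('a)}"
  have order: "\<forall>s\<in>?L. \<forall>t\<in>?L. t \<subseteq> s \<longleftrightarrow> ?E s \<subseteq> ?E t"
    using edges_of_subset_iff by blast
  then have "inj_on ?E ?L"
    by (intro inj_onI) blast
  moreover have "?E ` ?L \<subseteq> ?flats"
    using balanced_flat_edges_of[OF assms(1)] flat_rank_edges_of_le[OF assms(1,3)] by blast
  moreover have "?flats \<subseteq> ?E ` ?L"
  proof
    fix S assume "S \<in> ?flats"
    then show "S \<in> ?E ` ?L"
      using edges_of_Inter_balanced_flat[OF assms, of S] by (intro rev_image_eqI) auto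
  qed
  ultimately show ?thesis
    unfolding general_position_def bij_betw_def using order by blast
qed

end
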